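(* Let $\phi\colon\mathbb{R}\to\mathbb{R}$ be an increasing homeomorphism with $\phi(0)=0$, let $f\colon\mathbb{R}\to\mathbb{R}$ be continuous and let $h\colon[0,T]\times\mathbb{R}\to\mathbb{R}$ be a Carathéodory function. For $\lambda\in\,]0,1]$ consider $$(\phi(u'))'+\lambda f(u)u'+\lambda h(t,u)=0. \qquad (\ast_\lambda)$$ If there exists $d_1>0$ such that $\int_0^T h(t,u(t))\,dt\neq 0$ for each $u\in\mathcal{C}^1_T$ with $u(t)\ge d_1$ for all $t\in[0,T]$, then every $T$-periodic solution $u$ of $(\ast_\lambda)$ with $\lambda\in\,]0,1]$ satisfies $\min u<d_1$. If there exists $d_2>0$ such that $\int_0^T h(t,u(t))\,dt\neq 0$ for each $u\in\mathcal{C}^1_T$ with $u(t)\le -d_2$ for all $t\in[0,T]$, then every $T$-periodic solution $u$ of $(\ast_\lambda)$ with $\lambda\in\,]0,1]$ satisfies $\max u>-d_2$.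
   Context: $\mathcal{C}^1_T=\{u\in\mathcal{C}^1([0,T]):u(0)=u(T),\,u'(0)=u'(T)\}$. A $T$-periodic solution is a $u\in\mathcal{C}^1_T$ with $\phi(u')$ absolutely continuous satisfying the equation a.e. A Carathéodory function is measurable in $t$, continuous in $u$, and for each $r>0$ bounded in absolute value on $[0,T]\times[-r,r]$ by an $L^1$ function of $t$. *)

theory Defs
  imports "HOL-Analysis.Analysis"
begin

definition incr_homeo :: "(real \<Rightarrow> real) \<Rightarrow> bool" where
  "incr_homeo \<phi> \<longleftrightarrow> mono \<phi> \<and> (\<exists>\<psi>. homeomorphism UNIV UNIV \<phi> \<psi>)"

definition caratheodory :: "real \<Rightarrow> (real \<Rightarrow> real \<Rightarrow> real) \<Rightarrow> bool" where
  "caratheodory T h \<longleftrightarrow>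
     (\<forall>x. (\<lambda>t. h t x) \<in> borel_measurable (lebesgue_on {0..T})) \<and>
     (\<forall>t\<in>{0..T}. continuous_on UNIV (h t)) \<and>
     (\<forall>r>0. \<exists>g. g integrable_on {0..T} \<and>
        (\<forall>t\<in>{0..T}. \<forall>x. \<bar>x\<bar> \<le> r \<longrightarrow> \<bar>h t x\<bar> \<le> g t))"

definition abs_cont_on :: "real \<Rightarrow> real \<Rightarrow> (real \<Rightarrow> real) \<Rightarrow> bool" where
  "abs_cont_on a b g \<longleftrightarrow>
    (\<forall>\<epsilon>>0. \<exists>\<delta>>0. \<forall>(n::nat) (l::nat \<Rightarrow> real) (r::nat \<Rightarrow> real).
       (\<forall>i<n. a \<le> l i \<and> l i \<le> r i \<and> r i \<le> b) \<and>
       (\<forall>i<n. \<forall>j<n. i \<noteq> j \<longrightarrow> {l i<..<r i} \<inter> {l j<..<r j} = {}) \<and>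
       (\<Sum>i<n. r i - l i) < \<delta>
       \<longrightarrow> (\<Sum>i<n. \<bar>g (r i) - g (l i)\<bar>) < \<epsilon>)"

definition C1T :: "real \<Rightarrow> (real \<Rightarrow> real) \<Rightarrow> (real \<Rightarrow> real) \<Rightarrow> bool" where
  "C1T T u u' \<longleftrightarrow>
     (\<forall>t\<in>{0..T}. (u has_real_derivative u' t) (at t within {0..T})) \<and>
     continuous_on {0..T} u' \<and> u 0 = u T \<and> u' 0 = u' T"

definition in_C1T :: "real \<Rightarrow> (real \<Rightarrow> real) \<Rightarrow> bool" where
  "in_C1T T u \<longleftrightarrow> (\<exists>u'. C1T T u u')"

definition periodic_solution ::
  "real \<Rightarrow> (real \<Rightarrow> real) \<Rightarrow> (real \<Rightarrow> real) \<Rightarrow> (real \<Rightarrow> real \<Rightarrow> real) \<Rightarrow> real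
    \<Rightarrow> (real \<Rightarrow> real) \<Rightarrow> bool" where
  "periodic_solution T \<phi> f h lam u \<longleftrightarrow>
     (\<exists>u'. C1T T u u' \<and> abs_cont_on 0 T (\<lambda>t. \<phi> (u' t)) \<and>
        (AE t in lebesgue_on {0..T}.
           ((\<lambda>s. \<phi> (u' s)) has_real_derivative
              (- lam * f (u t) * u' t - lam * h t (u t))) (at t within {0..T})))"

end

theory Submission
  imports Defs
begin

text \<open>Integrating the equation over a period kills its first two terms: \<open>(\<phi>(u'))'\<close>
  integrates to \<open>\<phi>(u'(T)) - \<phi>(u'(0)) = 0\<close>, and \<open>f(u)u'\<close> to \<open>F(u(T)) - F(u(0)) = 0\<close> for a
  primitive \<open>F\<close> of \<open>f\<close>. Hence \<open>\<integral>\<^sub>0\<^sup>T h(t,u(t)) dt = 0\<close> for every periodic solution with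
  \<open>\<lambda> > 0\<close>, which rules out \<open>min u \<ge> d\<^sub>1\<close> and \<open>max u \<le> -d\<^sub>2\<close>.

  The first integration is the fundamental theorem of calculus for an absolutely continuous
  function that is differentiable off a null set \<open>E\<close>. In its gauge proof, tags outside \<open>E\<close> are
  controlled by the derivative (a straddle estimate), while the intervals tagged in \<open>E\<close> lie in an
  open set of small measure, where absolute continuity makes the increments small.\<close>

lemma negligible_outer_open:
  assumes "negligible E" and "e > 0"
  obtains W where "open W" "E \<subseteq> W" "W \<in> lmeasurable" "measure lebesgue W < e"
proof -
  obtain W where W: "open W" "E \<subseteq> W" "W - E \<in> lmeasurable"
    and small: "emeasure lebesgue (W - E) < ennreal e"
    using sets_lebesgue_outer_open[OF negligible_imp_sets[OF assms(1)] assms(2)] by blast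
  have E: "E \<in> lmeasurable" "measure lebesgue E = 0"
    using assms(1) negligible_iff_measure by auto
  have WE: "W = (W - E) \<union> E" using W(2) by blast
  have Wm: "W \<in> lmeasurable" using fmeasurable.Un[OF W(3) E(1)] WE by simp
  have "measure lebesgue (W - E) < e"
    using W(3) small by (metis emeasure_eq_measure2 ennreal_less_iff measure_nonneg)
  then have "measure lebesgue W < e"
    using measure_Un_le[of "W - E" lebesgue E] W(3) E WE by (auto simp: fmeasurable_def)
  with W Wm show thesis using that by blast
qed

lemma tagged_partial_division_content_le_measure:
  fixes q :: "(real \<times> real set) set"
  assumes q: "q tagged_partial_division_of S" and W: "W \<in> lmeasurable"
    and sub: "\<And>x K. (x, K) \<in> q \<Longrightarrow> K \<subseteq> W"
  shows "(\<Sum>(x, K)\<in>q. measure lborel K) \<le> measure lebesgue W"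
proof -
  have td: "q tagged_division_of (\<Union>(snd ` q))"
    by (rule tagged_partial_division_of_Union_self[OF q])
  have div: "(snd ` q) division_of (\<Union>(snd ` q))"
    by (rule division_of_tagged_division[OF td])
  have "(\<Sum>(x, K)\<in>q. measure lborel K) = (\<Sum>K\<in>snd ` q. measure lborel K)"
    by (rule sum.over_tagged_division_lemma[OF td]) (simp add: content_eq_0_interior)
  also have "\<dots> = (\<Sum>K\<in>snd ` q. measure lebesgue K)"
  proof (rule sum.cong[OF refl])
    fix K assume "K \<in> snd ` q"
    then obtain u v where "K = cbox u v" using div by (meson division_ofD(4))
    then show "measure lborel K = measure lebesgue K" by simp
  qed
  also have "\<dots> = measure lebesgue (\<Union>(snd ` q))"
    by (rule content_division[OF div])
  also have "\<dots> \<le> measure lebesgue W"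
  proof (rule measure_mono_fmeasurable)
    show "\<Union>(snd ` q) \<subseteq> W" using sub by force
  qed (use lmeasurable_division[OF div] W in auto)
  finally show ?thesis .
qed

lemma tagged_partial_division_of_real_interval:
  fixes q :: "(real \<times> real set) set"
  assumes q: "q tagged_partial_division_of {a..b}" and xK: "(x, K) \<in> q"
  shows "K = {Inf K..Sup K}" "a \<le> Inf K" "Inf K \<le> x" "x \<le> Sup K" "Sup K \<le> b"
    "measure lborel K = Sup K - Inf K" "Inf K \<in> K" "Sup K \<in> K"
proof -
  from tagged_partial_division_ofD[OF q] xK
  obtain u v where K: "K = cbox u v" and x: "x \<in> K" and sub: "K \<subseteq> {a..b}" by metis
  then have "u \<le> v" by auto
  then have "Inf K = u" "Sup K = v" using K by auto
  then show "K = {Inf K..Sup K}" "a \<le> Inf K" "Inf K \<le> x" "x \<le> Sup K" "Sup K \<le> b"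
    "measure lborel K = Sup K - Inf K" "Inf K \<in> K" "Sup K \<in> K"
    using K \<open>u \<le> v\<close> sub x by auto
qed

lemma abs_cont_on_tagged_partial_division:
  assumes ac: "abs_cont_on a b g" and e: "e > 0"
  obtains d where "d > 0" "\<And>q. q tagged_partial_division_of {a..b} \<Longrightarrow>
      (\<Sum>(x, K)\<in>q. measure lborel K) < d \<Longrightarrow> (\<Sum>(x, K)\<in>q. \<bar>g (Sup K) - g (Inf K)\<bar>) < e"
proof -
  obtain d where d: "d > 0" and dd: "\<And>(n::nat) (l::nat \<Rightarrow> real) (r::nat \<Rightarrow> real).
       (\<forall>i<n. a \<le> l i \<and> l i \<le> r i \<and> r i \<le> b) \<Longrightarrow>
       (\<forall>i<n. \<forall>j<n. i \<noteq> j \<longrightarrow> {l i<..<r i} \<inter> {l j<..<r j} = {}) \<Longrightarrow>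
       (\<Sum>i<n. r i - l i) < d \<Longrightarrow> (\<Sum>i<n. \<bar>g (r i) - g (l i)\<bar>) < e"
    using ac e unfolding abs_cont_on_def by meson
  show ?thesis
  proof (rule that[OF d])
    fix q :: "(real \<times> real set) set"
    assume q: "q tagged_partial_division_of {a..b}"
      and small: "(\<Sum>(x, K)\<in>q. measure lborel K) < d"
    obtain enum where enum: "bij_betw enum {..<card q} q"
      using ex_bij_betw_nat_finite[OF tagged_partial_division_ofD(1)[OF q]]
      by (auto simp: atLeast0LessThan)
    define n where "n = card q"
    define l where "l i = Inf (snd (enum i))" for i
    define r where "r i = Sup (snd (enum i))" for i
    have enum_in: "enum i \<in> q" if "i < n" for i
      using enum that unfolding n_def bij_betw_def by auto
    have lr: "a \<le> l i" "l i \<le> r i" "r i \<le> b" "snd (enum i) = {l i..r i}" if "i < n" for i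
      using tagged_partial_division_of_real_interval[OF q, of "fst (enum i)" "snd (enum i)"]
        enum_in[OF that] unfolding l_def r_def by auto
    have disjoint: "{l i<..<r i} \<inter> {l j<..<r j} = {}" if "i < n" "j < n" "i \<noteq> j" for i j
    proof -
      have "enum i \<noteq> enum j" using enum that unfolding bij_betw_def inj_on_def n_def by auto
      then have "interior (snd (enum i)) \<inter> interior (snd (enum j)) = {}"
        using tagged_partial_division_ofD(5)[OF q,
            of "fst (enum i)" "snd (enum i)" "fst (enum j)" "snd (enum j)"] enum_in that
        by auto
      then show ?thesis using lr that by simp
    qed
    have reindex: "(\<Sum>i<n. G (l i) (r i)) = (\<Sum>(x, K)\<in>q. G (Inf K) (Sup K))"
      for G :: "real \<Rightarrow> real \<Rightarrow> real"
    proof -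
      have "(\<Sum>i<n. G (l i) (r i)) = (\<Sum>i<n. (\<lambda>(x, K). G (Inf K) (Sup K)) (enum i))"
        by (simp add: split_beta l_def r_def)
      also have "\<dots> = (\<Sum>(x, K)\<in>q. G (Inf K) (Sup K))"
        using sum.reindex_bij_betw[OF enum] unfolding n_def by simp
      finally show ?thesis .
    qed
    have "(\<Sum>(x, K)\<in>q. measure lborel K) = (\<Sum>(x, K)\<in>q. Sup K - Inf K)"
      by (intro sum.cong refl)
        (auto dest: tagged_partial_division_of_real_interval(6)[OF q])
    then have "(\<Sum>i<n. r i - l i) < d"
      using small reindex[of "\<lambda>s t. t - s"] by simp
    moreover have "\<forall>i<n. a \<le> l i \<and> l i \<le> r i \<and> r i \<le> b"
      using lr(1-3) by blast
    ultimately have "(\<Sum>i<n. \<bar>g (r i) - g (l i)\<bar>) < e"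
      using dd[of n l r] disjoint by blast
    then show "(\<Sum>(x, K)\<in>q. \<bar>g (Sup K) - g (Inf K)\<bar>) < e"
      using reindex[of "\<lambda>s t. \<bar>g t - g s\<bar>"] by simp
  qed
qed

lemma straddle_increment_le:
  fixes g :: "real \<Rightarrow> real"
  assumes "u \<le> x" "x \<le> v"
    and left: "\<bar>g u - g x - c * (u - x)\<bar> \<le> \<eta> * \<bar>u - x\<bar>"
    and right: "\<bar>g v - g x - c * (v - x)\<bar> \<le> \<eta> * \<bar>v - x\<bar>"
  shows "\<bar>(v - u) * c - (g v - g u)\<bar> \<le> \<eta> * (v - u)"
proof -
  have "(v - u) * c - (g v - g u) = (g u - g x - c * (u - x)) - (g v - g x - c * (v - x))"
    by (simp add: algebra_simps)
  then have "\<bar>(v - u) * c - (g v - g u)\<bar>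
      \<le> \<bar>g u - g x - c * (u - x)\<bar> + \<bar>g v - g x - c * (v - x)\<bar>"
    by (metis abs_triangle_ineq4)
  also have "\<dots> \<le> \<eta> * (x - u) + \<eta> * (v - x)"
    using left right \<open>u \<le> x\<close> \<open>x \<le> v\<close> by (simp add: abs_minus_commute)
  also have "\<dots> = \<eta> * (v - u)"
    by (simp add: algebra_simps)
  finally show ?thesis .
qed

lemma tagged_partial_division_derivative_error_le:
  fixes g k :: "real \<Rightarrow> real"
  assumes p: "p tagged_partial_division_of {a..b}" and "a \<le> b" and "\<eta> \<ge> 0"
    and approx: "\<And>x K y. (x, K) \<in> p \<Longrightarrow> y \<in> K \<Longrightarrow>
      \<bar>g y - g x - k x * (y - x)\<bar> \<le> \<eta> * \<bar>y - x\<bar>"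
  shows "\<bar>\<Sum>(x, K)\<in>p. measure lborel K * k x - (g (Sup K) - g (Inf K))\<bar> \<le> \<eta> * (b - a)"
proof -
  have term_le: "\<bar>measure lborel K * k x - (g (Sup K) - g (Inf K))\<bar> \<le> \<eta> * measure lborel K"
    if xK: "(x, K) \<in> p" for x K
  proof -
    note I = tagged_partial_division_of_real_interval[OF p xK]
    have "\<bar>(Sup K - Inf K) * k x - (g (Sup K) - g (Inf K))\<bar> \<le> \<eta> * (Sup K - Inf K)"
      by (rule straddle_increment_le[OF I(3,4) approx[OF xK I(7)] approx[OF xK I(8)]])
    then show ?thesis using I(6) by (metis mult.commute)
  qed
  have "\<bar>\<Sum>(x, K)\<in>p. measure lborel K * k x - (g (Sup K) - g (Inf K))\<bar>
      \<le> (\<Sum>(x, K)\<in>p. \<eta> * measure lborel K)"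
    by (rule order_trans[OF sum_abs sum_mono]) (simp add: split_beta term_le)
  also have "\<dots> = \<eta> * (\<Sum>(x, K)\<in>p. measure lborel K)"
    by (simp add: sum_distrib_left split_def)
  also have "\<dots> \<le> \<eta> * (b - a)"
  proof -
    have "(\<Sum>(x, K)\<in>p. measure lborel K) \<le> measure lebesgue {a..b}"
      by (rule tagged_partial_division_content_le_measure[OF p])
        (use tagged_partial_division_ofD(3)[OF p] in auto)
    then have "(\<Sum>(x, K)\<in>p. measure lborel K) \<le> b - a"
      using \<open>a \<le> b\<close> by simp
    then show ?thesis using \<open>\<eta> \<ge> 0\<close> by (rule mult_left_mono)
  qed
  finally show ?thesis .
qed

lemma fundamental_theorem_of_calculus_abs_cont:
  fixes g k :: "real \<Rightarrow> real"
  assumes ab: "a \<le> b" and ac: "abs_cont_on a b g" and E: "negligible E"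
    and der: "\<And>x. x \<in> {a..b} - E \<Longrightarrow> (g has_real_derivative k x) (at x within {a..b})"
  shows "(k has_integral (g b - g a)) {a..b}"
proof -
  define k' where "k' x = (if x \<in> E then 0 else k x)" for x
  have "(k' has_integral (g b - g a)) (cbox a b)"
    unfolding has_integral
  proof (intro allI impI)
    fix e :: real assume e: "e > 0"
    obtain \<delta> where \<delta>: "\<delta> > 0" and ac_small: "\<And>q. q tagged_partial_division_of {a..b} \<Longrightarrow>
      (\<Sum>(x, K)\<in>q. measure lborel K) < \<delta> \<Longrightarrow> (\<Sum>(x, K)\<in>q. \<bar>g (Sup K) - g (Inf K)\<bar>) < e/2"
      using abs_cont_on_tagged_partial_division[OF ac, of "e/2"] e by auto
    obtain W where W: "open W" "E \<subseteq> W" "W \<in> lmeasurable" "measure lebesgue W < \<delta>"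
      using negligible_outer_open[OF E \<delta>] .
    define \<eta> where "\<eta> = e / (2 * (b - a + 1))"
    have \<eta>: "\<eta> > 0" "\<eta> * (b - a) < e/2" using e ab unfolding \<eta>_def by (auto simp: field_simps)
    obtain dW where dW: "\<And>x. x \<in> E \<Longrightarrow> dW x > 0 \<and> ball x (dW x) \<subseteq> W"
      using W(1,2) open_contains_ball by (metis subsetD)
    have "\<forall>x\<in>{a..b}-E. \<exists>r>0. \<forall>y\<in>{a..b}. norm (y - x) < r \<longrightarrow>
         norm (g y - g x - k x * (y - x)) \<le> \<eta> * norm (y - x)"
      using der \<eta>(1) unfolding has_field_derivative_def has_derivative_within_alt by blast
    then obtain dD where dD: "\<And>x. x \<in> {a..b}-E \<Longrightarrow> dD x > 0 \<and> (\<forall>y\<in>{a..b}.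
         \<bar>y - x\<bar> < dD x \<longrightarrow> \<bar>g y - g x - k x * (y - x)\<bar> \<le> \<eta> * \<bar>y - x\<bar>)"
      by (metis real_norm_def)
    define d where "d x = (if x \<in> E then dW x else if x \<in> {a..b} then dD x else 1)" for x
    have "\<forall>x. d x > 0" using dW dD unfolding d_def by auto
    then have gauge: "gauge (\<lambda>x. ball x (d x))" by (rule gauge_ball_dependent)
    have "norm ((\<Sum>(x, K)\<in>p. measure lborel K *\<^sub>R k' x) - (g b - g a)) < e"
      if p: "p tagged_division_of {a..b}" and fine: "(\<lambda>x. ball x (d x)) fine p" for p
    proof -
      have ppart: "p tagged_partial_division_of {a..b}"
        using p unfolding tagged_division_of_def by blast
      define pE where "pE = {(x, K) \<in> p. x \<in> E}"
      define pN where "pN = {(x, K) \<in> p. x \<notin> E}"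
      define F where "F = (\<lambda>(x::real, K::real set). measure lborel K * k' x - (g (Sup K) - g (Inf K)))"
      have "(\<Sum>(x, K)\<in>p. measure lborel K *\<^sub>R k' x) - (g b - g a) = sum F p"
        using additive_tagged_division_1[OF ab p, of g]
        by (simp add: F_def split_def sum_subtractf)
      also have "\<dots> = sum F pE + sum F pN"
      proof -
        have "p = pE \<union> pN" "pE \<inter> pN = {}" unfolding pE_def pN_def by auto
        then show ?thesis using sum.union_disjoint p by (metis finite_Un tagged_division_of_finite)
      qed
      finally have split: "(\<Sum>(x, K)\<in>p. measure lborel K *\<^sub>R k' x) - (g b - g a)
          = sum F pE + sum F pN" .
      have pE: "pE tagged_partial_division_of {a..b}"
        by (rule tagged_partial_division_subset[OF ppart]) (auto simp: pE_def)
      have "\<bar>sum F pE\<bar> \<le> (\<Sum>(x, K)\<in>pE. \<bar>g (Sup K) - g (Inf K)\<bar>)"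
        by (rule order_trans[OF sum_abs eq_refl], rule sum.cong)
          (auto simp: F_def k'_def pE_def)
      also have "\<dots> < e/2"
      proof (rule ac_small[OF pE])
        have "K \<subseteq> W" if "(x, K) \<in> pE" for x K
        proof -
          have "x \<in> E" "(x, K) \<in> p" using that unfolding pE_def by auto
          then show ?thesis using fine dW[of x] unfolding fine_def d_def by fastforce
        qed
        then have "(\<Sum>(x, K)\<in>pE. measure lborel K) \<le> measure lebesgue W"
          by (rule tagged_partial_division_content_le_measure[OF pE W(3)])
        then show "(\<Sum>(x, K)\<in>pE. measure lborel K) < \<delta>" using W(4) by linarith
      qed
      finally have bound_E: "\<bar>sum F pE\<bar> < e/2" .
      have pN: "pN tagged_partial_division_of {a..b}"
        by (rule tagged_partial_division_subset[OF ppart]) (auto simp: pN_def)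
      have "\<bar>\<Sum>(x, K)\<in>pN. measure lborel K * k x - (g (Sup K) - g (Inf K))\<bar> \<le> \<eta> * (b - a)"
      proof (rule tagged_partial_division_derivative_error_le[OF pN ab less_imp_le[OF \<eta>(1)]])
        fix x K y assume xK: "(x, K) \<in> pN" and y: "y \<in> K"
        have xp: "(x, K) \<in> p" and xE: "x \<notin> E" using xK unfolding pN_def by auto
        have "x \<in> K" "K \<subseteq> {a..b}" using tagged_division_ofD(2,3)[OF p xp] by auto
        then have x: "x \<in> {a..b} - E" using xE by auto
        have "K \<subseteq> ball x (d x)" using fine xp unfolding fine_def by auto
        moreover have "d x = dD x" using x unfolding d_def by auto
        ultimately have "y \<in> ball x (dD x)" using y by auto
        then have "\<bar>y - x\<bar> < dD x" by (simp add: dist_real_def abs_minus_commute)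
        then show "\<bar>g y - g x - k x * (y - x)\<bar> \<le> \<eta> * \<bar>y - x\<bar>"
          using dD[OF x] y \<open>K \<subseteq> {a..b}\<close> by blast
      qed
      moreover have "sum F pN = (\<Sum>(x, K)\<in>pN. measure lborel K * k x - (g (Sup K) - g (Inf K)))"
        by (rule sum.cong) (auto simp: F_def k'_def pN_def)
      ultimately have bound_N: "\<bar>sum F pN\<bar> < e/2" using \<eta>(2) by linarith
      show ?thesis unfolding split using bound_E bound_N by simp
    qed
    then show "\<exists>\<gamma>. gauge \<gamma> \<and> (\<forall>\<D>. \<D> tagged_division_of cbox a b \<and> \<gamma> fine \<D> \<longrightarrow>
        norm ((\<Sum>(x, K)\<in>\<D>. measure lborel K *\<^sub>R k' x) - (g b - g a)) < e)"
      using gauge by auto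
  qed
  then have "(k' has_integral (g b - g a)) {a..b}" by simp
  then show ?thesis
    by (rule has_integral_spike[OF E, rotated]) (simp add: k'_def)
qed

lemma has_integral_comp_mult_derivative_eq_0:
  fixes f u u' :: "real \<Rightarrow> real"
  assumes ab: "a \<le> b" and f: "continuous_on UNIV f" and ends: "u a = u b"
    and du: "\<And>t. t \<in> {a..b} \<Longrightarrow> (u has_real_derivative u' t) (at t within {a..b})"
  shows "((\<lambda>t. f (u t) * u' t) has_integral 0) {a..b}"
proof -
  have "continuous_on {a..b} u" using du by (rule DERIV_continuous_on)
  then have "bounded (u ` {a..b})" by (simp add: compact_continuous_image compact_imp_bounded)
  then obtain B where "\<forall>y\<in>u ` {a..b}. \<bar>y\<bar> \<le> B" by (auto simp: bounded_real)
  then have B: "u ` {a..b} \<subseteq> {-B..B}" by (auto simp: abs_le_iff)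
  have "((\<lambda>t. u' t *\<^sub>R f (u t)) has_integral integral {u a..u b} f) {a..b}"
    by (rule has_integral_substitution[OF ab _ B continuous_on_subset[OF f] du])
      (use ends in auto)
  then show ?thesis using ends by (simp add: mult.commute)
qed

lemma in_C1T_imp_continuous_on:
  assumes "in_C1T T u"
  shows "continuous_on {0..T} u"
  using assms DERIV_continuous_on unfolding in_C1T_def C1T_def by blast

lemma periodic_solution_imp_in_C1T:
  assumes "periodic_solution T \<phi> f h lam u"
  shows "in_C1T T u"
  using assms unfolding periodic_solution_def in_C1T_def by blast

lemma periodic_solution_integral_eq_0:
  fixes T lam :: real and \<phi> f :: "real \<Rightarrow> real" and h :: "real \<Rightarrow> real \<Rightarrow> real"
  assumes T: "T > 0" and lam: "lam > 0" and f: "continuous_on UNIV f"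
    and sol: "periodic_solution T \<phi> f h lam u"
  shows "integral {0..T} (\<lambda>t. h t (u t)) = 0"
proof -
  obtain u' where c1: "C1T T u u'" and ac: "abs_cont_on 0 T (\<lambda>t. \<phi> (u' t))"
    and ae: "AE t in lebesgue_on {0..T}. ((\<lambda>s. \<phi> (u' s)) has_real_derivative
        (- lam * f (u t) * u' t - lam * h t (u t))) (at t within {0..T})"
    using sol unfolding periodic_solution_def by blast
  have du: "\<And>t. t \<in> {0..T} \<Longrightarrow> (u has_real_derivative u' t) (at t within {0..T})"
    and per: "u 0 = u T" "u' 0 = u' T"
    using c1 unfolding C1T_def by auto
  define k where "k t = - lam * f (u t) * u' t - lam * h t (u t)" for t
  have "AE t in lebesgue. t \<in> {0..T} \<longrightarrow>
      ((\<lambda>s. \<phi> (u' s)) has_real_derivative k t) (at t within {0..T})"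
    using ae unfolding k_def by (subst (asm) AE_restrict_space_iff) auto
  then obtain N where N: "negligible N" and NN: "{t. \<not> (t \<in> {0..T} \<longrightarrow>
      ((\<lambda>s. \<phi> (u' s)) has_real_derivative k t) (at t within {0..T}))} \<subseteq> N"
    unfolding eventually_ae_filter_negligible by blast
  have "(k has_integral (\<phi> (u' T) - \<phi> (u' 0))) {0..T}"
    by (rule fundamental_theorem_of_calculus_abs_cont[OF _ ac N]) (use T NN in auto)
  then have k0: "(k has_integral 0) {0..T}" using per by simp
  have f0: "((\<lambda>t. f (u t) * u' t) has_integral 0) {0..T}"
    using has_integral_comp_mult_derivative_eq_0[OF _ f per(1) du] T by simp
  have "((\<lambda>t. - (k t + lam * (f (u t) * u' t)) / lam) has_integral (- (0 + lam * 0) / lam)) {0..T}"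
    by (intro has_integral_divide has_integral_neg has_integral_add k0 has_integral_mult_right f0)
  moreover have "(\<lambda>t. - (k t + lam * (f (u t) * u' t)) / lam) = (\<lambda>t. h t (u t))"
    using lam by (auto simp: k_def field_simps)
  ultimately show ?thesis by (simp add: integral_unique)
qed

theorem lemma2p3:
  fixes T :: real and \<phi> f :: "real \<Rightarrow> real" and h :: "real \<Rightarrow> real \<Rightarrow> real"
    and d1 d2 :: real
  assumes T: "T > 0"
    and phi: "incr_homeo \<phi>" "\<phi> 0 = 0"
    and f: "continuous_on UNIV f"
    and h: "caratheodory T h"
  shows "((d1 > 0 \<and> (\<forall>u. in_C1T T u \<and> (\<forall>t\<in>{0..T}. u t \<ge> d1)
                   \<longrightarrow> integral {0..T} (\<lambda>t. h t (u t)) \<noteq> 0))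
         \<longrightarrow> (\<forall>lam u. 0 < lam \<and> lam \<le> 1 \<and> periodic_solution T \<phi> f h lam u
                   \<longrightarrow> Inf (u ` {0..T}) < d1)) \<and>
         ((d2 > 0 \<and> (\<forall>u. in_C1T T u \<and> (\<forall>t\<in>{0..T}. u t \<le> - d2)
                   \<longrightarrow> integral {0..T} (\<lambda>t. h t (u t)) \<noteq> 0))
         \<longrightarrow> (\<forall>lam u. 0 < lam \<and> lam \<le> 1 \<and> periodic_solution T \<phi> f h lam u
                   \<longrightarrow> Sup (u ` {0..T}) > - d2))"
proof -
  have sol: "in_C1T T u" "integral {0..T} (\<lambda>t. h t (u t)) = 0"
      "bdd_below (u ` {0..T})" "bdd_above (u ` {0..T})"
    if "0 < lam" "periodic_solution T \<phi> f h lam u" for lam u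
  proof -
    show C1: "in_C1T T u" using that(2) by (rule periodic_solution_imp_in_C1T)
    show "integral {0..T} (\<lambda>t. h t (u t)) = 0"
      using periodic_solution_integral_eq_0[OF T that(1) f that(2)] .
    have "bounded (u ` {0..T})"
      using C1 by (simp add: compact_continuous_image compact_imp_bounded in_C1T_imp_continuous_on)
    then show "bdd_below (u ` {0..T})" "bdd_above (u ` {0..T})"
      by (simp_all add: bounded_imp_bdd_below bounded_imp_bdd_above)
  qed
  have nonempty: "{0..T} \<noteq> {}" using T by simp
  show ?thesis
  proof (intro conjI impI allI; elim conjE)
    fix lam u
    assume no_sol: "\<forall>u. in_C1T T u \<and> (\<forall>t\<in>{0..T}. d1 \<le> u t)
        \<longrightarrow> integral {0..T} (\<lambda>t. h t (u t)) \<noteq> 0"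
      and "0 < lam" "periodic_solution T \<phi> f h lam u"
    note sol = sol[OF this(2,3)]
    then have "\<exists>t\<in>{0..T}. u t < d1" using no_sol sol(1,2) not_le by blast
    then show "Inf (u ` {0..T}) < d1" using cINF_less_iff[OF nonempty sol(3)] by simp
  next
    fix lam u
    assume no_sol: "\<forall>u. in_C1T T u \<and> (\<forall>t\<in>{0..T}. u t \<le> - d2)
        \<longrightarrow> integral {0..T} (\<lambda>t. h t (u t)) \<noteq> 0"
      and "0 < lam" "periodic_solution T \<phi> f h lam u"
    note sol = sol[OF this(2,3)]
    then have "\<exists>t\<in>{0..T}. - d2 < u t" using no_sol sol(1,2) not_le by blast
    then show "- d2 < Sup (u ` {0..T})" using less_cSUP_iff[OF nonempty sol(4)] by simp
  qed
qed

end
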